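(* Let $N\ge1$ and $\Gamma_N=\{0,\dots,N-1\}^2\subset\mathbb{Z}^2$, and take $c^+=N-1$, $c^-=0$ so that $d^+_0$ and $d^-_0$ are the main diagonals of $\Gamma_N$. Then, with all functions restricted to $\Gamma_N$: (i) for $N=1$, $\{H^+_{\geq0}\}$ is a basis of $\mathcal{H}^{\Gamma_N}_\mathbb{Z}$; (ii) for $N$ even, $\{H^+_{\geq i},H^+_{\leq -i},H^-_{\geq i},H^-_{\leq -i}\}_{i=1,\dots,N-1}$ is a basis of $\mathcal{H}^{\Gamma_N}_\mathbb{Z}$; (iii) for $N\ge3$ odd, $\{H^+_{\geq0},H^+_{\leq-1},H^-_{\geq1},H^-_{\leq-1}\}\cup\{H^+_{\geq i},H^+_{\leq -i},H^-_{\geq i},H^-_{\leq -i}\}_{i=2,\dots,N-1}$ is a basis of $\mathcal{H}^{\Gamma_N}_\mathbb{Z}$.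
   Context: Adjacency $\sim$ is nearest-neighbor adjacency in $\mathbb{Z}^2$. For finite $\Gamma$, $(\Delta_\Gamma f)(v)=\sum_{w\in\Gamma,\,w\sim v}f(w)-4f(v)$, $\partial\Gamma$ is the set of vertices of $\Gamma$ with a neighbor outside $\Gamma$, and $\mathcal{H}^\Gamma_\mathbb{Z}$ is the module of $H:\Gamma\to\mathbb{Z}$ with $(\Delta_\Gamma H)(v)=0$ for all $v\in\Gamma\setminus\partial\Gamma$. A function $H:\mathbb{Z}^2\to\mathbb{Z}$ is harmonic on $\mathbb{Z}^2$ if $4H(v)=\sum_{w\sim v}H(w)$ for all $v$. Diagonals: $d^+_i=\{(x,y)\in\mathbb{Z}^2: x+y=i+c^+\}$, $d^-_i=\{(x,y): x-y=i+c^-\}$. $H^+_{\geq i}$ denotes any integer-valued harmonic function on $\mathbb{Z}^2$ that vanishes on $d^+_k$ for all $k<i$ and takes values in $\{+1,-1\}$ on $d^+_i$ (its values on each diagonal $d^+_k$, $k>i$, are determined by one freely chosen value on that diagonal, any choice allowed); $H^+_{\leq i}$ is defined likewise but vanishing on $d^+_k$ for all $k>i$; $H^-_{\geq i},H^-_{\leq i}$ likewise with $d^-$ in place of $d^+$. *)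

theory Defs
  imports Main
begin

type_synonym vtx = "int \<times> int"

definition adj :: "vtx \<Rightarrow> vtx \<Rightarrow> bool" where
  "adj v w \<longleftrightarrow> \<bar>fst v - fst w\<bar> + \<bar>snd v - snd w\<bar> = 1"

definition lap_on :: "vtx set \<Rightarrow> (vtx \<Rightarrow> int) \<Rightarrow> vtx \<Rightarrow> int" where
  "lap_on G f v = (\<Sum>w\<in>{w\<in>G. adj w v}. f w) - 4 * f v"

definition bdry :: "vtx set \<Rightarrow> vtx set" where
  "bdry G = {v\<in>G. \<exists>w. adj w v \<and> w \<notin> G}"

text \<open>The Z-module H^Gamma_Z; functions are compared on G only.\<close>
definition harm_module :: "vtx set \<Rightarrow> (vtx \<Rightarrow> int) set" where
  "harm_module G = {H. \<forall>v\<in>G - bdry G. lap_on G H v = 0}"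

definition harmonic_Z2 :: "(vtx \<Rightarrow> int) \<Rightarrow> bool" where
  "harmonic_Z2 H \<longleftrightarrow> (\<forall>v. 4 * H v = (\<Sum>w\<in>{w. adj w v}. H w))"

definition dplus :: "int \<Rightarrow> int \<Rightarrow> vtx set" where
  "dplus c i = {(x, y). x + y = i + c}"

definition dminus :: "int \<Rightarrow> int \<Rightarrow> vtx set" where
  "dminus c i = {(x, y). x - y = i + c}"

definition is_H_ge :: "(int \<Rightarrow> vtx set) \<Rightarrow> int \<Rightarrow> (vtx \<Rightarrow> int) \<Rightarrow> bool" where
  "is_H_ge d i H \<longleftrightarrow> harmonic_Z2 H \<and> (\<forall>k<i. \<forall>v\<in>d k. H v = 0) \<and> (\<forall>v\<in>d i. H v \<in> {1, -1})"

definition is_H_le :: "(int \<Rightarrow> vtx set) \<Rightarrow> int \<Rightarrow> (vtx \<Rightarrow> int) \<Rightarrow> bool" where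
  "is_H_le d i H \<longleftrightarrow> harmonic_Z2 H \<and> (\<forall>k>i. \<forall>v\<in>d k. H v = 0) \<and> (\<forall>v\<in>d i. H v \<in> {1, -1})"

definition Gamma :: "int \<Rightarrow> vtx set" where
  "Gamma N = {0..N-1} \<times> {0..N-1}"

datatype kind = PlusGe | PlusLe | MinusGe | MinusLe

definition is_H :: "int \<Rightarrow> kind \<Rightarrow> int \<Rightarrow> (vtx \<Rightarrow> int) \<Rightarrow> bool" where
  "is_H N k i H = (case k of
      PlusGe \<Rightarrow> is_H_ge (dplus (N - 1)) i H
    | PlusLe \<Rightarrow> is_H_le (dplus (N - 1)) i H
    | MinusGe \<Rightarrow> is_H_ge (dminus 0) i H
    | MinusLe \<Rightarrow> is_H_le (dminus 0) i H)"

definition is_Z_basis :: "vtx set \<Rightarrow> 'i set \<Rightarrow> ('i \<Rightarrow> vtx \<Rightarrow> int) \<Rightarrow> bool" where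
  "is_Z_basis G I b \<longleftrightarrow> finite I \<and> (\<forall>j\<in>I. b j \<in> harm_module G) \<and>
     (\<forall>H\<in>harm_module G. \<exists>!c. (\<forall>j. j \<notin> I \<longrightarrow> c j = 0) \<and>
        (\<forall>v\<in>G. H v = (\<Sum>j\<in>I. c j * b j v)))"

definition idx_one :: "(kind \<times> int) set" where
  "idx_one = {(PlusGe, 0)}"

definition idx_even :: "int \<Rightarrow> (kind \<times> int) set" where
  "idx_even N = (\<Union>i\<in>{1..N-1}. {(PlusGe, i), (PlusLe, -i), (MinusGe, i), (MinusLe, -i)})"

definition idx_odd :: "int \<Rightarrow> (kind \<times> int) set" where
  "idx_odd N = {(PlusGe, 0), (PlusLe, -1), (MinusGe, 1), (MinusLe, -1)} \<union>
     (\<Union>i\<in>{2..N-1}. {(PlusGe, i), (PlusLe, -i), (MinusGe, i), (MinusLe, -i)})"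

end

theory Submission
  imports Defs
begin

(* Attach to each basis function a pivot vertex of Gamma N where it is +1 or -1, and order the
   functions so that each one vanishes at the pivots of all earlier ones: the pivots of the H^-
   and of the central H^+ lie on the two middle antidiagonals x + y = N - 1, N (one for each value
   of x - y), those of the other H^+ on the right and left columns. The evaluation matrix at the
   pivots is then unitriangular, so the family is independent over Z, and Gaussian elimination
   writes every H in the module as an integer combination plus a function vanishing at all pivots.
   Such a function vanishes on Gamma N: the mean-value equation at interior vertices propagates
   zeros from two consecutive antidiagonals and one endpoint of the next antidiagonal to all of it. *)

lemma adj_neighbours: "{w. adj w (x, y)} = {(x + 1, y), (x - 1, y), (x, y + 1), (x, y - 1)}"
proof -
  have "\<bar>a\<bar> + \<bar>b\<bar> = (1::int) \<longleftrightarrow> (a = 1 \<or> a = -1) \<and> b = 0 \<or> a = 0 \<and> (b = 1 \<or> b = -1)" for a b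
    by arith
  then show ?thesis
    by (auto simp: adj_def)
qed

lemma mem_Gamma: "(x, y) \<in> Gamma N \<longleftrightarrow> 0 \<le> x \<and> x \<le> N - 1 \<and> 0 \<le> y \<and> y \<le> N - 1"
  by (simp add: Gamma_def)

lemma harmonic_Z2_in_harm_module:
  assumes "harmonic_Z2 H"
  shows "H \<in> harm_module G"
  unfolding harm_module_def
proof (intro CollectI ballI)
  fix v assume "v \<in> G - bdry G"
  then have "{w \<in> G. adj w v} = {w. adj w v}"
    unfolding bdry_def by blast
  with assms show "lap_on G H v = 0"
    unfolding lap_on_def harmonic_Z2_def by (cases v) simp
qed

lemma harm_module_diff_scaled:
  assumes "H \<in> harm_module G" "K \<in> harm_module G"
  shows "(\<lambda>v. H v - a * K v) \<in> harm_module G"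
proof -
  have "lap_on G (\<lambda>v. H v - a * K v) v = lap_on G H v - a * lap_on G K v" for v
    unfolding lap_on_def by (simp add: sum_subtractf sum_distrib_left algebra_simps)
  with assms show ?thesis
    unfolding harm_module_def by simp
qed

lemma harm_module_Gamma_interior:
  assumes "H \<in> harm_module (Gamma N)" "1 \<le> x" "x \<le> N - 2" "1 \<le> y" "y \<le> N - 2"
  shows "H (x + 1, y) + H (x - 1, y) + H (x, y + 1) + H (x, y - 1) = 4 * H (x, y)"
proof -
  have nbrs: "{w. adj w (x, y)} \<subseteq> Gamma N"
    using assms(2-5) unfolding adj_neighbours Gamma_def by auto
  then have "(x, y) \<in> Gamma N - bdry (Gamma N)"
    using assms(2-5) unfolding bdry_def Gamma_def by auto
  then have "lap_on (Gamma N) H (x, y) = 0"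
    using assms(1) unfolding harm_module_def by blast
  moreover have "{w \<in> Gamma N. adj w (x, y)} = {(x + 1, y), (x - 1, y), (x, y + 1), (x, y - 1)}"
    using nbrs unfolding adj_neighbours[symmetric] by blast
  ultimately show ?thesis
    unfolding lap_on_def by simp
qed

definition is_combination ::
    "'v set \<Rightarrow> 'i set \<Rightarrow> ('i \<Rightarrow> 'v \<Rightarrow> int) \<Rightarrow> ('i \<Rightarrow> int) \<Rightarrow> ('v \<Rightarrow> int) \<Rightarrow> bool"
  where "is_combination G I b c H \<longleftrightarrow>
    (\<forall>j. j \<notin> I \<longrightarrow> c j = 0) \<and> (\<forall>v\<in>G. H v = (\<Sum>j\<in>I. c j * b j v))"

lemma is_Z_basis_iff_combination:
  "is_Z_basis G I b \<longleftrightarrow> finite I \<and> (\<forall>j\<in>I. b j \<in> harm_module G) \<and>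
     (\<forall>H\<in>harm_module G. \<exists>!c. is_combination G I b c H)"
  unfolding is_Z_basis_def is_combination_def ..

lemma triangular_combination_unique:
  fixes b :: "'i \<Rightarrow> 'v \<Rightarrow> int" and p :: "'i \<Rightarrow> 'v" and r :: "'i \<Rightarrow> int"
  assumes "finite I" "inj_on r I"
    and pivot_in: "\<And>j. j \<in> I \<Longrightarrow> p j \<in> G"
    and pivot_unit: "\<And>j. j \<in> I \<Longrightarrow> b j (p j) \<in> {1, -1}"
    and triangular: "\<And>j j'. j \<in> I \<Longrightarrow> j' \<in> I \<Longrightarrow> r j' < r j \<Longrightarrow> b j (p j') = 0"
    and "is_combination G I b c H" "is_combination G I b c' H"
  shows "c = c'"
proof (rule ccontr)
  assume "c \<noteq> c'"
  define S where "S = {j \<in> I. c j \<noteq> c' j}"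
  have "S \<noteq> {}"
    using \<open>c \<noteq> c'\<close> assms(6,7) unfolding S_def is_combination_def by fastforce
  moreover have "finite S"
    using \<open>finite I\<close> unfolding S_def by simp
  ultimately obtain j0 where "j0 \<in> S" and j0_min: "\<And>j. j \<in> S \<Longrightarrow> r j0 \<le> r j"
    using arg_min_if_finite[of S r] by (metis not_le)
  then have "j0 \<in> I"
    unfolding S_def by simp
  have "(\<Sum>j\<in>I. (c j - c' j) * b j (p j0)) = 0"
    using assms(6,7) pivot_in[OF \<open>j0 \<in> I\<close>]
    unfolding is_combination_def by (simp add: sum_subtractf left_diff_distrib)
  moreover have "(c j - c' j) * b j (p j0) = 0" if "j \<in> I - {j0}" for j
  proof (cases "j \<in> S")
    case True
    then have "r j0 < r j"
      using j0_min \<open>j0 \<in> I\<close> that \<open>inj_on r I\<close> by (fastforce dest: inj_onD)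
    then show ?thesis
      using triangular \<open>j0 \<in> I\<close> that by simp
  qed (use that S_def in simp)
  ultimately have "(c j0 - c' j0) * b j0 (p j0) = 0"
    using sum.remove[OF \<open>finite I\<close> \<open>j0 \<in> I\<close>] sum.neutral
    by (metis (no_types, lifting) add.right_neutral)
  then show False
    using \<open>j0 \<in> S\<close> pivot_unit[OF \<open>j0 \<in> I\<close>] unfolding S_def by auto
qed

lemma triangular_combination_exists:
  fixes b :: "'i \<Rightarrow> 'v \<Rightarrow> int" and p :: "'i \<Rightarrow> 'v" and r :: "'i \<Rightarrow> int"
  assumes "finite I" "inj_on r I"
    and diff_closed: "\<And>H K a. H \<in> M \<Longrightarrow> K \<in> M \<Longrightarrow> (\<lambda>v. H v - a * K v) \<in> M"
    and basis_in: "\<And>j. j \<in> I \<Longrightarrow> b j \<in> M"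
    and pivot_unit: "\<And>j. j \<in> I \<Longrightarrow> b j (p j) \<in> {1, -1}"
    and triangular: "\<And>j j'. j \<in> I \<Longrightarrow> j' \<in> I \<Longrightarrow> r j' < r j \<Longrightarrow> b j (p j') = 0"
    and determined: "\<And>H. H \<in> M \<Longrightarrow> (\<forall>j\<in>I. H (p j) = 0) \<Longrightarrow> \<forall>v\<in>G. H v = 0"
    and "H \<in> M"
  shows "\<exists>c. is_combination G I b c H"
proof -
  define K where "K = (\<Sum>j\<in>I. \<bar>r j\<bar>) + 1"
  have K: "\<bar>r j\<bar> < K" if "j \<in> I" for j
    using member_le_sum[OF that, of "\<lambda>j. \<bar>r j\<bar>"] \<open>finite I\<close> unfolding K_def by simp
  \<comment> \<open>Gaussian elimination, clearing the pivots in order of increasing rank.\<close>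
  have elim: "\<forall>H\<in>M. (\<forall>j\<in>I. r j < m \<longrightarrow> H (p j) = 0) \<longrightarrow> (\<exists>c. is_combination G I b c H)"
    if "m \<le> K" for m
    using that
  proof (induction m rule: int_le_induct)
    case base
    show ?case
    proof (intro ballI impI)
      fix H assume "H \<in> M" "\<forall>j\<in>I. r j < K \<longrightarrow> H (p j) = 0"
      then have "\<forall>v\<in>G. H v = 0"
        using determined K by fastforce
      then show "\<exists>c. is_combination G I b c H"
        by (intro exI[of _ "\<lambda>_. 0"]) (simp add: is_combination_def)
    qed
  next
    case (step m)
    show ?case
    proof (intro ballI impI)
      fix H assume "H \<in> M" and below: "\<forall>j\<in>I. r j < m - 1 \<longrightarrow> H (p j) = 0"
      show "\<exists>c. is_combination G I b c H"
      proof (cases "\<exists>j0\<in>I. r j0 = m - 1")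
        case False
        then show ?thesis
          using step.IH \<open>H \<in> M\<close> below by fastforce
      next
        case True
        then obtain j0 where "j0 \<in> I" "r j0 = m - 1" ..
        define a where "a = H (p j0) * b j0 (p j0)"
        define H' where "H' = (\<lambda>v. H v - a * b j0 v)"
        have "H' \<in> M"
          unfolding H'_def using diff_closed \<open>H \<in> M\<close> basis_in \<open>j0 \<in> I\<close> by blast
        moreover have "H' (p j) = 0" if "j \<in> I" "r j < m" for j
        proof (cases "j = j0")
          case True
          have "b j0 (p j0) * b j0 (p j0) = 1"
            using pivot_unit[OF \<open>j0 \<in> I\<close>] by auto
          then show ?thesis
            unfolding H'_def a_def True by (simp add: algebra_simps)
        next
          case False
          then have "r j \<noteq> r j0"
            using that(1) \<open>j0 \<in> I\<close> \<open>inj_on r I\<close> by (metis inj_onD)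
          then have "r j < m - 1"
            using that(2) \<open>r j0 = m - 1\<close> by linarith
          then show ?thesis
            using below triangular[OF \<open>j0 \<in> I\<close> \<open>j \<in> I\<close>] \<open>r j0 = m - 1\<close> that
            unfolding H'_def by simp
        qed
        ultimately obtain c where c: "is_combination G I b c H'"
          using step.IH by blast
        have "is_combination G I b (c(j0 := c j0 + a)) H"
          using c \<open>j0 \<in> I\<close> \<open>finite I\<close> unfolding is_combination_def H'_def
          by (auto simp: sum.remove algebra_simps)
        then show ?thesis by blast
      qed
    qed
  qed
  have "-K \<le> K"
    using sum_nonneg[of I "\<lambda>j. \<bar>r j\<bar>"] unfolding K_def by simp
  moreover have "\<forall>j\<in>I. r j < -K \<longrightarrow> H (p j) = 0"
    using K by fastforce
  ultimately show ?thesis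
    using elim \<open>H \<in> M\<close> by blast
qed

lemma is_Z_basis_triangularI:
  fixes b :: "'i \<Rightarrow> vtx \<Rightarrow> int" and p :: "'i \<Rightarrow> vtx" and r :: "'i \<Rightarrow> int"
  assumes "finite I" "inj_on r I"
    and "\<And>j. j \<in> I \<Longrightarrow> b j \<in> harm_module G"
    and "\<And>j. j \<in> I \<Longrightarrow> p j \<in> G"
    and "\<And>j. j \<in> I \<Longrightarrow> b j (p j) \<in> {1, -1}"
    and "\<And>j j'. j \<in> I \<Longrightarrow> j' \<in> I \<Longrightarrow> r j' < r j \<Longrightarrow> b j (p j') = 0"
    and "\<And>H. H \<in> harm_module G \<Longrightarrow> \<forall>j\<in>I. H (p j) = 0 \<Longrightarrow> \<forall>v\<in>G. H v = 0"
  shows "is_Z_basis G I b"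
  unfolding is_Z_basis_iff_combination
proof (intro conjI ballI ex_ex1I)
  fix H assume "H \<in> harm_module G"
  show "\<exists>c. is_combination G I b c H"
    by (rule triangular_combination_exists[OF assms(1,2) harm_module_diff_scaled assms(3,5-7)
          \<open>H \<in> harm_module G\<close>])
  fix c c' assume "is_combination G I b c H" "is_combination G I b c' H"
  then show "c = c'"
    using triangular_combination_unique[of I r p G b] assms(1,2,4-6) by blast
qed (use assms in auto)

definition zero_on_antidiag :: "int \<Rightarrow> (vtx \<Rightarrow> int) \<Rightarrow> int \<Rightarrow> bool" where
  "zero_on_antidiag N H s \<longleftrightarrow> (\<forall>(x, y)\<in>Gamma N. x + y = s \<longrightarrow> H (x, y) = 0)"

lemma zero_on_antidiag_outside: "s < 0 \<or> 2 * N - 2 < s \<Longrightarrow> zero_on_antidiag N H s"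
  unfolding zero_on_antidiag_def Gamma_def by auto

lemma zero_on_antidiag_up:
  assumes H: "H \<in> harm_module (Gamma N)" and "N \<le> s"
    and zero1: "zero_on_antidiag N H (s - 1)" and zero2: "zero_on_antidiag N H (s - 2)"
    and corner: "H (N - 1, s - (N - 1)) = 0"
  shows "zero_on_antidiag N H s"
proof -
  \<comment> \<open>Walk down the antidiagonal from the right column, using harmonicity at the vertex below-left.\<close>
  have "s - N + 1 \<le> x \<longrightarrow> H (x, s - x) = 0" if "x \<le> N - 1" for x
    using that
  proof (induction x rule: int_le_induct)
    case base
    show ?case
      using corner by simp
  next
    case (step x)
    show ?case
    proof
      assume "s - N + 1 \<le> x - 1"
      have "H (x, s - x) + H (x - 2, s - x) + H (x - 1, s - x + 1) + H (x - 1, s - x - 1)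
          = 4 * H (x - 1, s - x)"
        using harm_module_Gamma_interior[OF H, of "x - 1" "s - x"]
          \<open>s - N + 1 \<le> x - 1\<close> step.hyps \<open>N \<le> s\<close>
        by (simp add: algebra_simps)
      moreover have "H (x, s - x) = 0"
        using step.IH \<open>s - N + 1 \<le> x - 1\<close> by simp
      moreover have "H (x - 2, s - x) = 0" "H (x - 1, s - x - 1) = 0"
        using zero2 \<open>s - N + 1 \<le> x - 1\<close> step.hyps \<open>N \<le> s\<close>
        unfolding zero_on_antidiag_def Gamma_def by auto
      moreover have "H (x - 1, s - x) = 0"
        using zero1 \<open>s - N + 1 \<le> x - 1\<close> step.hyps \<open>N \<le> s\<close>
        unfolding zero_on_antidiag_def Gamma_def by auto
      ultimately show "H (x - 1, s - (x - 1)) = 0"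
        by (simp add: algebra_simps)
    qed
  qed
  then show ?thesis
    unfolding zero_on_antidiag_def Gamma_def by force
qed

lemma zero_on_antidiag_down:
  assumes H: "H \<in> harm_module (Gamma N)" and "s \<le> N - 2"
    and zero1: "zero_on_antidiag N H (s + 1)" and zero2: "zero_on_antidiag N H (s + 2)"
    and corner: "H (0, s) = 0"
  shows "zero_on_antidiag N H s"
proof -
  \<comment> \<open>Walk up the antidiagonal from the left column, using harmonicity at the vertex above-right.\<close>
  have "x \<le> s \<longrightarrow> H (x, s - x) = 0" if "0 \<le> x" for x
    using that
  proof (induction x rule: int_ge_induct)
    case base
    show ?case using corner by simp
  next
    case (step x)
    show ?case
    proof
      assume "x + 1 \<le> s"
      have "H (x + 2, s - x) + H (x, s - x) + H (x + 1, s - x + 1) + H (x + 1, s - x - 1)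
          = 4 * H (x + 1, s - x)"
        using harm_module_Gamma_interior[OF H, of "x + 1" "s - x"]
          \<open>x + 1 \<le> s\<close> step.hyps \<open>s \<le> N - 2\<close>
        by (simp add: algebra_simps)
      moreover have "H (x, s - x) = 0"
        using step.IH \<open>x + 1 \<le> s\<close> by simp
      moreover have "H (x + 2, s - x) = 0" "H (x + 1, s - x + 1) = 0"
        using zero2 \<open>x + 1 \<le> s\<close> step.hyps \<open>s \<le> N - 2\<close>
        unfolding zero_on_antidiag_def Gamma_def by auto
      moreover have "H (x + 1, s - x) = 0"
        using zero1 \<open>x + 1 \<le> s\<close> step.hyps \<open>s \<le> N - 2\<close>
        unfolding zero_on_antidiag_def Gamma_def by auto
      ultimately show "H (x + 1, s - (x + 1)) = 0"
        by (simp add: algebra_simps)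
    qed
  qed
  then show ?thesis
    unfolding zero_on_antidiag_def Gamma_def by force
qed

lemma zero_on_Gamma_from_middle:
  assumes H: "H \<in> harm_module (Gamma N)"
    and middle: "zero_on_antidiag N H (N - 1)" "zero_on_antidiag N H N"
    and right: "\<And>y. 2 \<le> y \<Longrightarrow> y \<le> N - 1 \<Longrightarrow> H (N - 1, y) = 0"
    and left: "\<And>y. 0 \<le> y \<Longrightarrow> y \<le> N - 2 \<Longrightarrow> H (0, y) = 0"
  shows "\<forall>v\<in>Gamma N. H v = 0"
proof -
  have "zero_on_antidiag N H s \<and> zero_on_antidiag N H (s + 1)" for s
  proof (induction s rule: int_induct[where k = "N - 1"])
    case base
    then show ?case using middle by simp
  next
    case (step1 s)
    have "zero_on_antidiag N H (s + 2)"
    proof (cases "s + 2 \<le> 2 * N - 2")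
      case True
      have "N \<le> s + 2"
        using step1(1) by simp
      moreover have "s + 2 - 1 = s + 1" "s + 2 - 2 = s"
        by simp_all
      moreover have "H (N - 1, s + 2 - (N - 1)) = 0"
        using right True step1(1) by simp
      ultimately show ?thesis
        using zero_on_antidiag_up[OF H] step1(2) by metis
    qed (simp add: zero_on_antidiag_outside)
    moreover have "s + 1 + 1 = s + 2"
      by simp
    ultimately show ?case
      using step1(2) by metis
  next
    case (step2 s)
    have "zero_on_antidiag N H (s - 1)"
    proof (cases "0 \<le> s - 1")
      case True
      have "s - 1 \<le> N - 2"
        using step2(1) by simp
      moreover have "s - 1 + 1 = s" "s - 1 + 2 = s + 1"
        by simp_all
      moreover have "H (0, s - 1) = 0"
        using left True step2(1) by simp
      ultimately show ?thesis
        using zero_on_antidiag_down[OF H] step2(2) by metis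
    qed (simp add: zero_on_antidiag_outside)
    then show ?case
      using step2(2) by simp
  qed
  then show ?thesis
    unfolding zero_on_antidiag_def by fast
qed

(* The vertex with x - y = i on whichever of the antidiagonals x + y = N - 1, x + y = N
   has the parity of N - i. *)
definition mid_pt :: "int \<Rightarrow> int \<Rightarrow> vtx" where
  "mid_pt N i = (i + (N - i) div 2, (N - i) div 2)"

lemma mid_pt_diff [simp]: "fst (mid_pt N i) - snd (mid_pt N i) = i"
  unfolding mid_pt_def by simp

lemma mid_pt_sum: "fst (mid_pt N i) + snd (mid_pt N i) = N - (N - i) mod 2"
  using minus_mod_eq_mult_div[of "N - i" 2] unfolding mid_pt_def by simp

lemma mid_pt_antidiag:
  "N - 1 \<le> fst (mid_pt N i) + snd (mid_pt N i)" "fst (mid_pt N i) + snd (mid_pt N i) \<le> N"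
  unfolding mid_pt_sum using pos_mod_sign[of 2 "N - i"] pos_mod_bound[of 2 "N - i"] by simp_all

lemma mid_pt_in_Gamma:
  assumes "\<bar>i\<bar> \<le> N - 1"
  shows "mid_pt N i \<in> Gamma N"
proof -
  have "2 * ((N - i) div 2) \<le> N - i" "N - i \<le> 2 * ((N - i) div 2) + 1"
    using minus_mod_eq_mult_div[of "N - i" 2] pos_mod_sign[of 2 "N - i"] pos_mod_bound[of 2 "N - i"]
    by linarith+
  with assms show ?thesis
    unfolding mid_pt_def Gamma_def by auto
qed

lemma mid_pt_eq:
  assumes "x + y = N - 1 \<or> x + y = N"
  shows "mid_pt N (x - y) = (x, y)"
proof -
  have "N - (x - y) = 2 * y \<or> N - (x - y) = 2 * y + 1"
    using assms by auto
  then have "(N - (x - y)) div 2 = y"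
    by auto
  then show ?thesis
    unfolding mid_pt_def by simp
qed

(* The three index sets of the theorem at once: the central H^+ is H^+_{>=1} for even N
   and H^+_{>=0} for odd N. *)
definition basis_idx :: "int \<Rightarrow> (kind \<times> int) set" where
  "basis_idx N = {(PlusGe, if even N then 1 else 0)} \<union> {PlusGe} \<times> {2..N - 1} \<union>
     {PlusLe} \<times> {-(N - 1)..-1} \<union> {MinusGe} \<times> {1..N - 1} \<union> {MinusLe} \<times> {-(N - 1)..-1}"

definition pivot :: "int \<Rightarrow> kind \<times> int \<Rightarrow> vtx" where
  "pivot N = (\<lambda>(k, i). case k of
       PlusGe \<Rightarrow> if i \<le> 1 then mid_pt N 0 else (N - 1, i)
     | PlusLe \<Rightarrow> (0, N - 1 + i)
     | MinusGe \<Rightarrow> mid_pt N i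
     | MinusLe \<Rightarrow> mid_pt N i)"

(* Only the order matters: since |i| <= N - 1, the central H^+ comes first, then the H^-_{>=i},
   the H^-_{<=i}, the remaining H^+_{>=i} and finally the H^+_{<=i}. *)
definition pivot_rank :: "int \<Rightarrow> kind \<times> int \<Rightarrow> int" where
  "pivot_rank N = (\<lambda>(k, i). case k of
       PlusGe \<Rightarrow> if i \<le> 1 then 0 else 2 * N + i
     | MinusGe \<Rightarrow> i
     | MinusLe \<Rightarrow> N - i
     | PlusLe \<Rightarrow> 3 * N - i)"

lemma mem_dplus: "v \<in> dplus c i \<longleftrightarrow> i = fst v + snd v - c"
  by (cases v) (auto simp: dplus_def)

lemma mem_dminus: "v \<in> dminus c i \<longleftrightarrow> i = fst v - snd v - c"
  by (cases v) (auto simp: dminus_def)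

lemma is_H_geD:
  assumes "is_H_ge d i H" "v \<in> d k"
  shows "k < i \<Longrightarrow> H v = 0" and "k = i \<Longrightarrow> H v \<in> {1, -1}"
  using assms unfolding is_H_ge_def by auto

lemma is_H_leD:
  assumes "is_H_le d i H" "v \<in> d k"
  shows "k > i \<Longrightarrow> H v = 0" and "k = i \<Longrightarrow> H v \<in> {1, -1}"
  using assms unfolding is_H_le_def by auto

lemma is_H_PlusGe:
  assumes "is_H N PlusGe i H"
  shows "fst v + snd v < i + (N - 1) \<Longrightarrow> H v = 0"
    and "fst v + snd v = i + (N - 1) \<Longrightarrow> H v \<in> {1, -1}"
  using assms is_H_geD[of "dplus (N - 1)" i H v "fst v + snd v - (N - 1)"]
  by (auto simp: is_H_def mem_dplus)

lemma is_H_PlusLe: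
  assumes "is_H N PlusLe i H"
  shows "fst v + snd v > i + (N - 1) \<Longrightarrow> H v = 0"
    and "fst v + snd v = i + (N - 1) \<Longrightarrow> H v \<in> {1, -1}"
  using assms is_H_leD[of "dplus (N - 1)" i H v "fst v + snd v - (N - 1)"]
  by (auto simp: is_H_def mem_dplus)

lemma is_H_MinusGe:
  assumes "is_H N MinusGe i H"
  shows "fst v - snd v < i \<Longrightarrow> H v = 0"
    and "fst v - snd v = i \<Longrightarrow> H v \<in> {1, -1}"
  using assms is_H_geD[of "dminus 0" i H v "fst v - snd v"]
  by (auto simp: is_H_def mem_dminus)

lemma is_H_MinusLe:
  assumes "is_H N MinusLe i H"
  shows "fst v - snd v > i \<Longrightarrow> H v = 0"
    and "fst v - snd v = i \<Longrightarrow> H v \<in> {1, -1}"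
  using assms is_H_leD[of "dminus 0" i H v "fst v - snd v"]
  by (auto simp: is_H_def mem_dminus)

lemma is_H_harmonic_Z2: "is_H N k i H \<Longrightarrow> harmonic_Z2 H"
  by (cases k) (auto simp: is_H_def is_H_ge_def is_H_le_def)

lemma finite_basis_idx: "finite (basis_idx N)"
  unfolding basis_idx_def by simp

lemma inj_on_pivot_rank: "inj_on (pivot_rank N) (basis_idx N)"
  by (auto simp: inj_on_def basis_idx_def pivot_rank_def split: if_splits)

lemma pivot_in_Gamma: "N \<ge> 1 \<Longrightarrow> j \<in> basis_idx N \<Longrightarrow> pivot N j \<in> Gamma N"
  by (auto simp: basis_idx_def pivot_def mem_Gamma abs_le_iff intro!: mid_pt_in_Gamma)

lemma pivot_unit:
  assumes "(k, i) \<in> basis_idx N" "is_H N k i H"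
  shows "H (pivot N (k, i)) \<in> {1, -1}"
proof (cases k)
  case PlusGe
  show ?thesis
  proof (cases "i \<le> 1")
    case True
    then have "i = (if even N then 1 else 0)"
      using assms(1) PlusGe by (auto simp: basis_idx_def)
    then have "fst (mid_pt N 0) + snd (mid_pt N 0) = i + (N - 1)"
      unfolding mid_pt_sum by (auto simp: even_iff_mod_2_eq_zero odd_iff_mod_2_eq_one)
    then show ?thesis
      using is_H_PlusGe(2) assms(2) PlusGe True by (simp add: pivot_def)
  next
    case False
    then show ?thesis
      using is_H_PlusGe(2) assms(2) PlusGe by (simp add: pivot_def)
  qed
next
  case PlusLe
  then show ?thesis
    using is_H_PlusLe(2) assms(2) by (simp add: pivot_def)
next
  case MinusGe
  then show ?thesis
    using is_H_MinusGe(2) assms(2) by (simp add: pivot_def)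
next
  case MinusLe
  then show ?thesis
    using is_H_MinusLe(2) assms(2) by (simp add: pivot_def)
qed

lemma pivot_triangular:
  assumes j: "(k, i) \<in> basis_idx N" and j': "j' \<in> basis_idx N"
    and lt: "pivot_rank N j' < pivot_rank N (k, i)" and H: "is_H N k i H"
  shows "H (pivot N j') = 0"
proof -
  obtain k' i' where j'_eq: "j' = (k', i')"
    by fastforce
  note bounds = mid_pt_antidiag[of N i'] mid_pt_antidiag[of N 0]
  show ?thesis
  proof (cases k)
    case PlusGe
    have "fst (pivot N j') + snd (pivot N j') < i + (N - 1)"
      using j j' lt PlusGe bounds unfolding j'_eq
      by (auto simp: basis_idx_def pivot_def pivot_rank_def split: if_splits)
    then show ?thesis
      using is_H_PlusGe(1) H PlusGe by simp
  next
    case PlusLe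
    have "fst (pivot N j') + snd (pivot N j') > i + (N - 1)"
      using j j' lt PlusLe bounds unfolding j'_eq
      by (auto simp: basis_idx_def pivot_def pivot_rank_def split: if_splits)
    then show ?thesis
      using is_H_PlusLe(1) H PlusLe by simp
  next
    case MinusGe
    have "fst (pivot N j') - snd (pivot N j') < i"
      using j j' lt MinusGe unfolding j'_eq
      by (auto simp: basis_idx_def pivot_def pivot_rank_def split: if_splits)
    then show ?thesis
      using is_H_MinusGe(1) H MinusGe by simp
  next
    case MinusLe
    have "fst (pivot N j') - snd (pivot N j') > i"
      using j j' lt MinusLe unfolding j'_eq
      by (auto simp: basis_idx_def pivot_def pivot_rank_def split: if_splits)
    then show ?thesis
      using is_H_MinusLe(1) H MinusLe by simp
  qed
qed

lemma zero_at_pivots_imp_zero_on_Gamma: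
  assumes "N \<ge> 1" "H \<in> harm_module (Gamma N)" "\<forall>j\<in>basis_idx N. H (pivot N j) = 0"
  shows "\<forall>v\<in>Gamma N. H v = 0"
proof (rule zero_on_Gamma_from_middle[OF assms(2)])
  have mid: "H (mid_pt N i) = 0" if "\<bar>i\<bar> \<le> N - 1" for i
  proof -
    consider "i = 0" | "i \<ge> 1" | "i \<le> -1"
      by linarith
    then show ?thesis
    proof cases
      case 1
      then have "pivot N (PlusGe, if even N then 1 else 0) = mid_pt N i"
        by (simp add: pivot_def)
      then show ?thesis
        using assms(3) unfolding basis_idx_def by auto
    next
      case 2
      then show ?thesis
        using assms(3) that unfolding basis_idx_def by (force simp: pivot_def)
    next
      case 3
      then show ?thesis
        using assms(3) that unfolding basis_idx_def by (force simp: pivot_def)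
    qed
  qed
  have "H (x, y) = 0" if "(x, y) \<in> Gamma N" "x + y = N - 1 \<or> x + y = N" for x y
  proof -
    have "\<bar>x - y\<bar> \<le> N - 1"
      using that(1) by (auto simp: mem_Gamma)
    then show ?thesis
      using mid[of "x - y"] mid_pt_eq[OF that(2)] by simp
  qed
  then show "zero_on_antidiag N H (N - 1)" "zero_on_antidiag N H N"
    unfolding zero_on_antidiag_def by auto
  show "H (N - 1, y) = 0" if "2 \<le> y" "y \<le> N - 1" for y
    using assms(3) that unfolding basis_idx_def by (force simp: pivot_def)
  show "H (0, y) = 0" if "0 \<le> y" "y \<le> N - 2" for y
  proof -
    have "(PlusLe, y - (N - 1)) \<in> basis_idx N"
      using that unfolding basis_idx_def by simp
    then show ?thesis
      using assms(3) by (force simp: pivot_def)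
  qed
qed

theorem is_Z_basis_diagonal_harmonics:
  fixes h :: "kind \<Rightarrow> int \<Rightarrow> vtx \<Rightarrow> int"
  assumes "N \<ge> 1" and h: "\<forall>(k, i)\<in>basis_idx N. is_H N k i (h k i)"
  shows "is_Z_basis (Gamma N) (basis_idx N) (\<lambda>(k, i). h k i)"
proof (rule is_Z_basis_triangularI[where p = "pivot N" and r = "pivot_rank N"])
  fix j j' assume "j \<in> basis_idx N"
  then obtain k i where j: "j = (k, i)" "(k, i) \<in> basis_idx N" "is_H N k i (h k i)"
    using h by (cases j) auto
  then show "(\<lambda>(k, i). h k i) j \<in> harm_module (Gamma N)"
    by (simp add: is_H_harmonic_Z2 harmonic_Z2_in_harm_module)
  show "pivot N j \<in> Gamma N"
    using pivot_in_Gamma \<open>N \<ge> 1\<close> j by simp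
  show "(\<lambda>(k, i). h k i) j (pivot N j) \<in> {1, -1}"
    using pivot_unit j by simp
  assume "j' \<in> basis_idx N" "pivot_rank N j' < pivot_rank N j"
  then show "(\<lambda>(k, i). h k i) j (pivot N j') = 0"
    using pivot_triangular j by simp
qed (use assms in \<open>simp_all add: finite_basis_idx inj_on_pivot_rank zero_at_pivots_imp_zero_on_Gamma\<close>)

lemma diagonal_quadruples_eq:
  "(\<Union>n\<in>A. {(PlusGe, n), (PlusLe, -n), (MinusGe, n), (MinusLe, -n)}) =
    {PlusGe} \<times> A \<union> {PlusLe} \<times> uminus ` A \<union> {MinusGe} \<times> A \<union> {MinusLe} \<times> uminus ` A"
  by (auto intro: rev_bexI)

lemma idx_one_eq_basis_idx: "idx_one = basis_idx 1"
  by (simp add: idx_one_def basis_idx_def)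

lemma idx_even_eq_basis_idx:
  assumes "even N" "N \<ge> 1"
  shows "idx_even N = basis_idx N"
proof (rule set_eqI)
  fix j :: "kind \<times> int"
  obtain k i where "j = (k, i)"
    by fastforce
  moreover have "N \<noteq> 1"
    using assms(1) by auto
  ultimately show "j \<in> idx_even N \<longleftrightarrow> j \<in> basis_idx N"
    using assms by (cases k) (auto simp: idx_even_def basis_idx_def diagonal_quadruples_eq)
qed

lemma idx_odd_eq_basis_idx:
  assumes "odd N" "N \<ge> 3"
  shows "idx_odd N = basis_idx N"
proof (rule set_eqI)
  fix j :: "kind \<times> int"
  obtain k i where "j = (k, i)"
    by fastforce
  then show "j \<in> idx_odd N \<longleftrightarrow> j \<in> basis_idx N"
    using assms by (cases k) (auto simp: idx_odd_def basis_idx_def diagonal_quadruples_eq)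
qed

theorem corollary7:
  fixes N :: int and h :: "kind \<Rightarrow> int \<Rightarrow> vtx \<Rightarrow> int"
  assumes "N \<ge> 1"
  shows "(N = 1 \<longrightarrow> (\<forall>(k, i)\<in>idx_one. is_H N k i (h k i)) \<longrightarrow>
            is_Z_basis (Gamma N) idx_one (\<lambda>(k, i). h k i))
       \<and> (even N \<longrightarrow> (\<forall>(k, i)\<in>idx_even N. is_H N k i (h k i)) \<longrightarrow>
            is_Z_basis (Gamma N) (idx_even N) (\<lambda>(k, i). h k i))
       \<and> (odd N \<and> N \<ge> 3 \<longrightarrow> (\<forall>(k, i)\<in>idx_odd N. is_H N k i (h k i)) \<longrightarrow>
            is_Z_basis (Gamma N) (idx_odd N) (\<lambda>(k, i). h k i))"
proof (intro conjI impI)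
  show "is_Z_basis (Gamma N) idx_one (\<lambda>(k, i). h k i)"
    if "N = 1" "\<forall>(k, i)\<in>idx_one. is_H N k i (h k i)"
    using that is_Z_basis_diagonal_harmonics[of 1 h] by (simp add: idx_one_eq_basis_idx)
  show "is_Z_basis (Gamma N) (idx_even N) (\<lambda>(k, i). h k i)"
    if "even N" "\<forall>(k, i)\<in>idx_even N. is_H N k i (h k i)"
    using that is_Z_basis_diagonal_harmonics[OF assms] idx_even_eq_basis_idx[OF _ assms] by simp
  show "is_Z_basis (Gamma N) (idx_odd N) (\<lambda>(k, i). h k i)"
    if "odd N \<and> N \<ge> 3" "\<forall>(k, i)\<in>idx_odd N. is_H N k i (h k i)"
    using that is_Z_basis_diagonal_harmonics[OF assms] idx_odd_eq_basis_idx by simp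
qed

end
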